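(* Define $F(n)$ and $G(n)$ by $F(0)=F(1)=G(0)=G(1)=1$ and, for $n\ge 2$, \[ F(n)=G(n)+\sum_{\ell,m\ge 1,\ \ell+m=n} G(\ell)G(m),\qquad G(n)=F(n-1)+G(n-1)+\sum_{\ell,m\ge 1,\ \ell+m=n-1} G(\ell)G(m). \] Then for all $n\ge 2$, \[ G(n)=2\sum_{m=1}^{n-1} G(m)\,G(n-1-m). \] *)

theory Defs
  imports Main
begin

function F :: "nat \<Rightarrow> nat" and G :: "nat \<Rightarrow> nat" where
  "F n = (if n \<le> 1 then 1 else G n + (\<Sum>l = 1..n-1. G l * G (n - l)))"
| "G n = (if n \<le> 1 then 1 else
           F (n-1) + G (n-1) + (\<Sum>l = 1..n-2. G l * G (n - 1 - l)))"
  by pat_completeness auto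
termination
  by (relation "measure (\<lambda>x. case x of Inl n \<Rightarrow> 2 * n + 1 | Inr n \<Rightarrow> 2 * n)") auto

end

theory Submission
  imports Defs
begin

text \<open>Unfolding the recursion for \<open>F (n - 1)\<close> inside that for \<open>G n\<close> produces the convolution
  sum \<open>S = \<Sum>l = 1..n-2. G l * G (n - 1 - l)\<close> twice, so \<open>G n = 2 * (G (n - 1) + S)\<close>; and
  \<open>G (n - 1) + S\<close> is the full convolution sum, its missing term being \<open>G (n - 1) * G 0\<close>.\<close>

lemma G_0: "G 0 = 1"
  by (subst G.simps) simp

lemma G_1: "G 1 = 1"
  by (subst G.simps) simp

lemma F_eq_G_plus_convolution:
  assumes "m \<ge> 1"
  shows "F m = G m + (\<Sum>l = 1..m-1. G l * G (m - l))"
proof (cases "m = 1")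
  case True
  then show ?thesis by (simp add: F.simps[of 1] G_1)
next
  case False
  with assms show ?thesis by (subst F.simps) simp
qed

lemma G_eq_F_plus_G_plus_convolution:
  assumes "n \<ge> 2"
  shows "G n = F (n-1) + G (n-1) + (\<Sum>l = 1..n-2. G l * G (n - 1 - l))"
  using assms by (subst G.simps) simp

lemma convolution_split_last:
  assumes "k \<ge> 1"
  shows "(\<Sum>m = 1..k. G m * G (k - m)) = G k + (\<Sum>m = 1..k-1. G m * G (k - m))"
proof -
  have "{1..k} = insert k {1..k-1}" using assms by auto
  then show ?thesis by (simp add: G_0)
qed

theorem mainTheorem3:
  fixes n :: nat
  assumes "n \<ge> 2"
  shows "G n = 2 * (\<Sum>m = 1..n-1. G m * G (n - 1 - m))"
proof -
  define k where "k = n - 1"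
  have k: "k \<ge> 1" "n - 2 = k - 1" "\<And>l. n - 1 - l = k - l"
    using assms unfolding k_def by auto
  let ?S = "\<Sum>l = 1..k-1. G l * G (k - l)"
  have "G n = F k + G k + ?S"
    using G_eq_F_plus_G_plus_convolution[OF assms] by (simp add: k k_def)
  also have "F k = G k + ?S"
    using F_eq_G_plus_convolution[OF \<open>k \<ge> 1\<close>] .
  also have "G k + ?S + G k + ?S = 2 * (\<Sum>m = 1..k. G m * G (k - m))"
    using convolution_split_last[OF \<open>k \<ge> 1\<close>] by simp
  finally show ?thesis by (simp add: k k_def)
qed

end
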